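(* In the non-binary voting game (with a sequence of instances sharing the same parameters), there exists a constant $N_\mu>0$ such that for all $N>N_\mu$, the fraction of friendly agents satisfies $N_F/N<\mu$ and the fraction of unfriendly agents satisfies $N_U/N<1-\mu$.
   Context: Non-binary voting game. $N$ agents vote for $\mathbf{A}$ or $\mathbf{R}$; world states $\{1,\dots,\mathcal{W}\}$; threshold $\mu\in(0,1)$. Agent $n$ has utility $v_n$ on states $\times\{\mathbf{A},\mathbf{R}\}$ with $v_n(w,\mathbf{A})$ strictly increasing, $v_n(w,\mathbf{R})$ strictly decreasing in $w$, and $v_n(w,\mathbf{A})\ne v_n(w,\mathbf{R})$. Constants $\alpha^{\mathbf{A}}_w$, $\alpha^{\mathbf{R}}_w=1-\alpha^{\mathbf{A}}_w$ independent of $N$: exactly $\lfloor\alpha^{\mathbf{R}}_wN\rfloor$ agents prefer $\mathbf{R}$ in state $w$, the other $N-\lfloor\alpha^{\mathbf{R}}_wN\rfloor$ prefer $\mathbf{A}$; $\alpha^{\mathbf{A}}_w\ne\mu$ for all $w$. $\mathcal{L}=\{w:\alpha^{\mathbf{A}}_w<\mu\}$ and $\mathcal{H}=\{w:\alpha^{\mathbf{A}}_w>\mu\}$ are both nonempty. For agent $n$, $\mathcal{L}_n=\{w:v_n(w,\mathbf{R})>v_n(w,\mathbf{A})\}$, $\mathcal{H}_n=\{w:v_n(w,\mathbf{A})>v_n(w,\mathbf{R})\}$; $n$ is friendly if $\mathcal{L}\cap\mathcal{H}_n\ne\emptyset$, unfriendly if $\mathcal{H}\cap\mathcal{L}_n\ne\emptyset$.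 $N_F$, $N_U$ denote the numbers of friendly and unfriendly agents in the instance with $N$ agents. *)

theory Defs
  imports Complex_Main
begin

datatype vote = Acc | Rej

definition L_states :: "(nat \<Rightarrow> real) \<Rightarrow> real \<Rightarrow> nat \<Rightarrow> nat set" where
  "L_states alphaA mu W = {w \<in> {1..W}. alphaA w < mu}"

definition H_states :: "(nat \<Rightarrow> real) \<Rightarrow> real \<Rightarrow> nat \<Rightarrow> nat set" where
  "H_states alphaA mu W = {w \<in> {1..W}. alphaA w > mu}"

definition L_agent :: "(nat \<Rightarrow> vote \<Rightarrow> real) \<Rightarrow> nat \<Rightarrow> nat set" where
  "L_agent u W = {w \<in> {1..W}. u w Rej > u w Acc}"

definition H_agent :: "(nat \<Rightarrow> vote \<Rightarrow> real) \<Rightarrow> nat \<Rightarrow> nat set" where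
  "H_agent u W = {w \<in> {1..W}. u w Acc > u w Rej}"

definition friendly :: "(nat \<Rightarrow> real) \<Rightarrow> real \<Rightarrow> nat \<Rightarrow> (nat \<Rightarrow> vote \<Rightarrow> real) \<Rightarrow> bool" where
  "friendly alphaA mu W u \<longleftrightarrow> L_states alphaA mu W \<inter> H_agent u W \<noteq> {}"

definition unfriendly :: "(nat \<Rightarrow> real) \<Rightarrow> real \<Rightarrow> nat \<Rightarrow> (nat \<Rightarrow> vote \<Rightarrow> real) \<Rightarrow> bool" where
  "unfriendly alphaA mu W u \<longleftrightarrow> H_states alphaA mu W \<inter> L_agent u W \<noteq> {}"

end

theory Submission
  imports Defs
begin

text \<open>Preferences are single-crossing in the state: the utility of \<open>Acc\<close> rises and that of
  \<open>Rej\<close> falls, so an agent preferring \<open>Acc\<close> in some state prefers it in every larger state.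
  Hence an agent is friendly iff she prefers \<open>Acc\<close> in the largest state \<open>wL\<close> of
  \<open>L_states\<close>, and unfriendly iff she prefers \<open>Rej\<close> in the smallest state \<open>wH\<close> of
  \<open>H_states\<close>. The counts in these single states are known, and rounding costs at most one
  agent: the friendly fraction is below \<open>alphaA wL + 1/N\<close>, which is below \<open>mu\<close> once
  \<open>N > 1 / (mu - alphaA wL)\<close>, while the unfriendly fraction is at most
  \<open>1 - alphaA wH < 1 - mu\<close> for every \<open>N\<close>.\<close>

lemma prefers_Acc_upward:
  fixes u :: "'s::order \<Rightarrow> vote \<Rightarrow> 'a::linorder"
  assumes "mono_on S (\<lambda>w. u w Acc)" "antimono_on S (\<lambda>w. u w Rej)"
    and "w \<in> S" "w' \<in> S" "w \<le> w'" "u w Rej < u w Acc"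
  shows "u w' Rej < u w' Acc"
proof -
  have "u w Acc \<le> u w' Acc" "u w' Rej \<le> u w Rej"
    using assms by (auto dest: monotone_onD)
  with \<open>u w Rej < u w Acc\<close> show ?thesis by order
qed

lemma prefers_Rej_downward:
  fixes u :: "'s::order \<Rightarrow> vote \<Rightarrow> 'a::linorder"
  assumes "mono_on S (\<lambda>w. u w Acc)" "antimono_on S (\<lambda>w. u w Rej)"
    and "w \<in> S" "w' \<in> S" "w \<le> w'" "u w' Acc < u w' Rej"
  shows "u w Acc < u w Rej"
proof -
  have "u w Acc \<le> u w' Acc" "u w' Rej \<le> u w Rej"
    using assms by (auto dest: monotone_onD)
  with \<open>u w' Acc < u w' Rej\<close> show ?thesis by order
qed

lemma finite_L_states: "finite (L_states alphaA mu W)"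
  unfolding L_states_def by simp

lemma finite_H_states: "finite (H_states alphaA mu W)"
  unfolding H_states_def by simp

lemma friendly_iff_prefers_Acc_at_Max_L_states:
  assumes "mono_on {1..W} (\<lambda>w. u w Acc)" "antimono_on {1..W} (\<lambda>w. u w Rej)"
    and "L_states alphaA mu W \<noteq> {}"
  shows "friendly alphaA mu W u \<longleftrightarrow>
    u (Max (L_states alphaA mu W)) Rej < u (Max (L_states alphaA mu W)) Acc"
    (is "_ \<longleftrightarrow> u ?wL Rej < u ?wL Acc")
proof -
  have wL: "?wL \<in> L_states alphaA mu W"
    using finite_L_states assms(3) by (rule Max_in)
  then have "?wL \<in> {1..W}" unfolding L_states_def by blast
  show ?thesis
  proof
    assume "friendly alphaA mu W u"
    then obtain w where "w \<in> L_states alphaA mu W" "w \<in> H_agent u W"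
      unfolding friendly_def by blast
    then have "w \<in> {1..W}" "u w Rej < u w Acc" "w \<le> ?wL"
      using finite_L_states unfolding H_agent_def by auto
    with assms(1,2) \<open>?wL \<in> {1..W}\<close> show "u ?wL Rej < u ?wL Acc"
      using prefers_Acc_upward by blast
  next
    assume "u ?wL Rej < u ?wL Acc"
    with wL \<open>?wL \<in> {1..W}\<close> show "friendly alphaA mu W u"
      unfolding friendly_def H_agent_def by blast
  qed
qed

lemma unfriendly_iff_prefers_Rej_at_Min_H_states:
  assumes "mono_on {1..W} (\<lambda>w. u w Acc)" "antimono_on {1..W} (\<lambda>w. u w Rej)"
    and "H_states alphaA mu W \<noteq> {}"
  shows "unfriendly alphaA mu W u \<longleftrightarrow>
    u (Min (H_states alphaA mu W)) Acc < u (Min (H_states alphaA mu W)) Rej"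
    (is "_ \<longleftrightarrow> u ?wH Acc < u ?wH Rej")
proof -
  have wH: "?wH \<in> H_states alphaA mu W"
    using finite_H_states assms(3) by (rule Min_in)
  then have "?wH \<in> {1..W}" unfolding H_states_def by blast
  show ?thesis
  proof
    assume "unfriendly alphaA mu W u"
    then obtain w where "w \<in> H_states alphaA mu W" "w \<in> L_agent u W"
      unfolding unfriendly_def by blast
    then have "w \<in> {1..W}" "u w Acc < u w Rej" "?wH \<le> w"
      using finite_H_states unfolding L_agent_def by auto
    with assms(1,2) \<open>?wH \<in> {1..W}\<close> show "u ?wH Acc < u ?wH Rej"
      using prefers_Rej_downward by blast
  next
    assume "u ?wH Acc < u ?wH Rej"
    with wH \<open>?wH \<in> {1..W}\<close> show "unfriendly alphaA mu W u"
      unfolding unfriendly_def L_agent_def by blast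
  qed
qed

lemma card_friendly_eq:
  assumes "\<And>n. n < N \<Longrightarrow> mono_on {1..W} (\<lambda>w. v n w Acc)"
    and "\<And>n. n < N \<Longrightarrow> antimono_on {1..W} (\<lambda>w. v n w Rej)"
    and "L_states alphaA mu W \<noteq> {}"
  shows "card {n. n < N \<and> friendly alphaA mu W (v n)} =
    card {n. n < N \<and> v n (Max (L_states alphaA mu W)) Rej < v n (Max (L_states alphaA mu W)) Acc}"
  using friendly_iff_prefers_Acc_at_Max_L_states[OF assms] by (intro arg_cong[where f = card]) auto

lemma card_unfriendly_eq:
  assumes "\<And>n. n < N \<Longrightarrow> mono_on {1..W} (\<lambda>w. v n w Acc)"
    and "\<And>n. n < N \<Longrightarrow> antimono_on {1..W} (\<lambda>w. v n w Rej)"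
    and "H_states alphaA mu W \<noteq> {}"
  shows "card {n. n < N \<and> unfriendly alphaA mu W (v n)} =
    card {n. n < N \<and> v n (Min (H_states alphaA mu W)) Acc < v n (Min (H_states alphaA mu W)) Rej}"
  using unfriendly_iff_prefers_Rej_at_Min_H_states[OF assms] by (intro arg_cong[where f = card]) auto

lemma acceptor_fraction_less:
  fixes a mu :: real
  assumes "0 < mu" "a < mu" "1 / (mu - a) < real N"
  shows "real (N - nat \<lfloor>(1 - a) * real N\<rfloor>) / real N < mu"
proof -
  have "0 < 1 / (mu - a)" using assms by simp
  with assms have "0 < real N" by linarith
  have "1 < (mu - a) * real N" using assms by (simp add: field_simps)
  have "real (N - nat \<lfloor>(1 - a) * real N\<rfloor>) < mu * real N"
  proof (cases "nat \<lfloor>(1 - a) * real N\<rfloor> \<le> N")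
    case True
    then have "real (N - nat \<lfloor>(1 - a) * real N\<rfloor>) = real N - real (nat \<lfloor>(1 - a) * real N\<rfloor>)"
      by simp
    also have "\<dots> \<le> real N - of_int \<lfloor>(1 - a) * real N\<rfloor>"
      by simp
    also have "\<dots> < real N - ((1 - a) * real N - 1)"
      by linarith
    also have "\<dots> < mu * real N"
      using \<open>1 < (mu - a) * real N\<close> by (simp add: algebra_simps)
    finally show ?thesis .
  qed (use \<open>0 < mu\<close> \<open>0 < real N\<close> in simp)
  with \<open>0 < real N\<close> show ?thesis by (simp add: divide_less_eq)
qed

lemma rejector_fraction_less:
  fixes a mu :: real
  assumes "mu < a" "mu < 1" "0 < N"
  shows "real (nat \<lfloor>(1 - a) * real N\<rfloor>) / real N < 1 - mu"
proof -
  have "real (nat \<lfloor>(1 - a) * real N\<rfloor>) < (1 - mu) * real N"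
  proof (cases "0 \<le> (1 - a) * real N")
    case True
    then have "real (nat \<lfloor>(1 - a) * real N\<rfloor>) \<le> (1 - a) * real N"
      by simp
    also have "\<dots> < (1 - mu) * real N"
      using assms by (simp add: mult_strict_right_mono)
    finally show ?thesis .
  qed (use assms in simp)
  with \<open>0 < N\<close> show ?thesis by (simp add: divide_less_eq)
qed

theorem proposition1:
  fixes W :: nat and mu :: real and alphaA :: "nat \<Rightarrow> real"
    and v :: "nat \<Rightarrow> nat \<Rightarrow> nat \<Rightarrow> vote \<Rightarrow> real"
    \<comment> \<open>v N n w a: utility of agent n (n < N) in the instance with N agents, state w, outcome a\<close>
  assumes W_pos: "W \<ge> 1"
    and mu: "0 < mu" "mu < 1"
    and incA: "\<And>N n w w'. n < N \<Longrightarrow> w \<in> {1..W} \<Longrightarrow> w' \<in> {1..W} \<Longrightarrow> w < w'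
                 \<Longrightarrow> v N n w Acc < v N n w' Acc"
    and decR: "\<And>N n w w'. n < N \<Longrightarrow> w \<in> {1..W} \<Longrightarrow> w' \<in> {1..W} \<Longrightarrow> w < w'
                 \<Longrightarrow> v N n w Rej > v N n w' Rej"
    and neq: "\<And>N n w. n < N \<Longrightarrow> w \<in> {1..W} \<Longrightarrow> v N n w Acc \<noteq> v N n w Rej"
    and count_R: "\<And>N w. w \<in> {1..W} \<Longrightarrow>
         card {n. n < N \<and> v N n w Rej > v N n w Acc} = nat \<lfloor>(1 - alphaA w) * real N\<rfloor>"
    and count_A: "\<And>N w. w \<in> {1..W} \<Longrightarrow>
         card {n. n < N \<and> v N n w Acc > v N n w Rej} = N - nat \<lfloor>(1 - alphaA w) * real N\<rfloor>"
    and alpha_ne_mu: "\<And>w. w \<in> {1..W} \<Longrightarrow> alphaA w \<noteq> mu"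
    and L_ne: "L_states alphaA mu W \<noteq> {}"
    and H_ne: "H_states alphaA mu W \<noteq> {}"
  shows "\<exists>Nmu::real. Nmu > 0 \<and> (\<forall>N::nat. real N > Nmu \<longrightarrow>
           real (card {n. n < N \<and> friendly alphaA mu W (v N n)}) / real N < mu \<and>
           real (card {n. n < N \<and> unfriendly alphaA mu W (v N n)}) / real N < 1 - mu)"
proof -
  define wL where "wL = Max (L_states alphaA mu W)"
  define wH where "wH = Min (H_states alphaA mu W)"
  have wL: "wL \<in> {1..W}" "alphaA wL < mu"
    using Max_in[OF finite_L_states L_ne] unfolding wL_def L_states_def by auto
  have wH: "wH \<in> {1..W}" "mu < alphaA wH"
    using Min_in[OF finite_H_states H_ne] unfolding wH_def H_states_def by auto
  have mono: "mono_on {1..W} (\<lambda>w. v N n w Acc)" if "n < N" for N n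
    using incA[OF that] by (intro strict_mono_on_imp_mono_on monotone_onI)
  have antimono: "antimono_on {1..W} (\<lambda>w. v N n w Rej)" if "n < N" for N n
  proof -
    have "strict_antimono_on {1..W} (\<lambda>w. v N n w Rej)"
      using decR[OF that] by (intro monotone_onI)
    then show ?thesis by (simp add: strict_antimono_iff_antimono)
  qed
  show ?thesis
  proof (intro exI conjI allI impI)
    show Nmu_pos: "0 < 1 / (mu - alphaA wL)" using wL by simp
    fix N :: nat
    assume N: "1 / (mu - alphaA wL) < real N"
    with Nmu_pos have "0 < real N" by linarith
    then have "0 < N" by simp
    show "real (card {n. n < N \<and> friendly alphaA mu W (v N n)}) / real N < mu"
      using acceptor_fraction_less[OF mu(1) wL(2) N]
      by (simp add: card_friendly_eq[OF mono antimono L_ne, folded wL_def] count_A[OF wL(1)])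
    show "real (card {n. n < N \<and> unfriendly alphaA mu W (v N n)}) / real N < 1 - mu"
      using rejector_fraction_less[OF wH(2) mu(2) \<open>0 < N\<close>]
      by (simp add: card_unfriendly_eq[OF mono antimono H_ne, folded wH_def] count_R[OF wH(1)])
  qed
qed

end
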